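(* Let $H$ be a $d\times d$ Hermitian matrix and $1/d<t<1$. Then there exists a density operator $\rho^*$ with $\mathrm{Tr}((\rho^* )^2)=t$ that maximizes $\mathrm{Tr}(\rho H)$ over $S^t$, and any such $\rho^*$ is an optimizer of the (non-convex) problem $$\min\{\|\rho-H\|_2:\ \rho\succeq0,\ \mathrm{Tr}\rho=1,\ \mathrm{Tr}(\rho^2)=t\}.$$
   Context: $S^t=\{\rho\in\mathcal{L}(\mathbb{C}^d):\rho\succeq 0,\ \mathrm{Tr}\rho=1,\ \mathrm{Tr}(\rho^2)\le t\}$; $\|\cdot\|_2$ is the Frobenius norm. *)

theory Defs
  imports "HOL-Analysis.Analysis"
begin

text \<open>Complex d x d matrices are modelled as complex^'n^'n with d = CARD('n).\<close>

definition conj_transpose :: "complex^'n^'n \<Rightarrow> complex^'n^'n" where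
  "conj_transpose A = (\<chi> i j. cnj (A $ j $ i))"

definition hermitian :: "complex^'n^'n \<Rightarrow> bool" where
  "hermitian A \<longleftrightarrow> conj_transpose A = A"

definition qform :: "complex^'n^'n \<Rightarrow> complex^'n \<Rightarrow> complex" where
  "qform A x = (\<Sum>i\<in>UNIV. \<Sum>j\<in>UNIV. cnj (x $ i) * A $ i $ j * x $ j)"

definition psd :: "complex^'n^'n \<Rightarrow> bool" where
  "psd A \<longleftrightarrow> (\<forall>x. Im (qform A x) = 0 \<and> 0 \<le> Re (qform A x))"

definition frob_norm :: "complex^'n^'n \<Rightarrow> real" where
  "frob_norm A = sqrt (\<Sum>i\<in>UNIV. \<Sum>j\<in>UNIV. (cmod (A $ i $ j))\<^sup>2)"

text \<open>S^t = {rho psd, Tr rho = 1, Tr(rho^2) <= t}.  Tr(rho^2) is real for psd rho.\<close>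
definition St :: "real \<Rightarrow> (complex^'n^'n) set" where
  "St t = {\<rho>. psd \<rho> \<and> trace \<rho> = 1 \<and> Re (trace (\<rho> ** \<rho>)) \<le> t}"

end

theory Submission
  imports Defs
begin

text \<open>
  Identify complex matrices with the Euclidean space of their entries: the Frobenius norm is
  the Euclidean norm, \<open>Re (Tr (\<rho> H))\<close> is the inner product of \<open>\<rho>\<close> with a Hermitian \<open>H\<close>, and
  \<open>Tr (\<rho>\<^sup>2) = \<parallel>\<rho>\<parallel>\<^sup>2\<close> for psd \<open>\<rho>\<close>.  Hence on the sphere \<open>Tr (\<rho>\<^sup>2) = t\<close> we have
  \<open>\<parallel>\<rho> - H\<parallel>\<^sup>2 = t - 2 Re (Tr (\<rho> H)) + \<parallel>H\<parallel>\<^sup>2\<close>, and a maximiser of the overlap on that sphere is a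
  nearest point to \<open>H\<close>.

  For existence, \<open>S\<^sup>t\<close> is compact, so the overlap attains its maximum at some \<open>\<rho>\<^sub>0\<close>.  Let \<open>v\<close> be a
  unit vector maximising the Rayleigh quotient of \<open>H\<close>, with value \<open>\<lambda>\<close>.  Since \<open>\<lambda> I - H\<close> is psd and
  the trace of a product of psd matrices is nonnegative (write one factor as a sum of rank-one
  matrices), every density matrix has overlap at most \<open>\<lambda> = Tr (v v\<^sup>* H)\<close>.  Along the segment from
  \<open>\<rho>\<^sub>0\<close> to \<open>v v\<^sup>*\<close> the overlap therefore does not decrease, while the purity moves continuously
  from at most \<open>t\<close> to \<open>1 \<ge> t\<close>; the point of purity exactly \<open>t\<close> is the required maximiser.
\<close>

lemma trace_matrix_mult: "trace (X ** Y) = (\<Sum>i\<in>UNIV. \<Sum>k\<in>UNIV. X$i$k * Y$k$i)"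
  by (simp add: trace_def matrix_matrix_mult_def)

lemma trace_mult_add_left:
  fixes X Y Z :: "'a::comm_semiring_1^'n^'n"
  shows "trace ((X + Y) ** Z) = trace (X ** Z) + trace (Y ** Z)"
  by (simp add: trace_matrix_mult algebra_simps sum.distrib)

lemma trace_mult_diff_right:
  fixes X Y Z :: "'a::comm_ring_1^'n^'n"
  shows "trace (X ** (Y - Z)) = trace (X ** Y) - trace (X ** Z)"
  by (simp add: trace_matrix_mult algebra_simps sum_subtractf)

lemma trace_mult_scaleR_left:
  fixes X Y :: "complex^'n^'n"
  shows "trace ((a *\<^sub>R X) ** Y) = complex_of_real a * trace (X ** Y)"
  unfolding trace_matrix_mult vector_scaleR_component
  unfolding scaleR_conv_of_real
  by (simp add: sum_distrib_left mult.assoc)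

lemma trace_scaleR:
  fixes X :: "complex^'n^'n"
  shows "trace (a *\<^sub>R X) = complex_of_real a * trace X"
  unfolding trace_def vector_scaleR_component
  unfolding scaleR_conv_of_real
  by (simp add: sum_distrib_left)

lemma trace_mult_mat_right:
  fixes X :: "'a::comm_semiring_1^'n^'n"
  shows "trace (X ** mat c) = trace X * c"
  unfolding trace_matrix_mult
  by (simp add: trace_def mat_def if_distrib if_distribR sum_distrib_right cong: if_cong)

lemma power2_norm_vec: "(norm (x::'a::real_normed_vector^'n))\<^sup>2 = (\<Sum>i\<in>UNIV. (norm (x$i))\<^sup>2)"
  unfolding norm_vec_def L2_set_def by (simp add: sum_nonneg)

lemma frob_norm_eq_norm: "frob_norm A = norm A"
  unfolding frob_norm_def by (rule real_sqrt_unique) (simp_all add: power2_norm_vec)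

lemma cnj_mult_self: "cnj z * z = complex_of_real ((cmod z)\<^sup>2)"
  by (simp only: complex_norm_square mult.commute)

lemma sum_cnj_mult_self: "(\<Sum>i\<in>UNIV. cnj (x$i) * x$i) = complex_of_real ((norm (x::complex^'n))\<^sup>2)"
  by (simp add: power2_norm_vec cnj_mult_self)

section \<open>Quadratic forms and positive semidefinite matrices\<close>

definition sesq :: "complex^'n^'n \<Rightarrow> complex^'n \<Rightarrow> complex^'n \<Rightarrow> complex" where
  "sesq A x y = (\<Sum>i\<in>UNIV. \<Sum>j\<in>UNIV. cnj (x $ i) * A $ i $ j * y $ j)"

lemma qform_eq_sesq: "qform A x = sesq A x x"
  by (simp add: qform_def sesq_def)

lemma sesq_add_left: "sesq A (x + y) z = sesq A x z + sesq A y z"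
  by (simp add: sesq_def algebra_simps sum.distrib)

lemma sesq_add_right: "sesq A x (y + z) = sesq A x y + sesq A x z"
  by (simp add: sesq_def algebra_simps sum.distrib)

lemma qform_add: "qform A (x + y) = qform A x + qform A y + sesq A x y + sesq A y x"
  by (simp add: qform_eq_sesq sesq_add_left sesq_add_right)

lemma sesq_axis_left: "sesq A (axis i c) x = cnj c * (\<Sum>l\<in>UNIV. A$i$l * x$l)"
  unfolding sesq_def
  by (subst sum.swap) (simp add: axis_def if_distrib if_distribR sum_distrib_left mult.assoc cong: if_cong)

lemma sesq_axis_right: "sesq A x (axis i c) = (\<Sum>k\<in>UNIV. cnj (x$k) * A$k$i) * c"
  by (simp add: sesq_def axis_def if_distrib if_distribR sum_distrib_right cong: if_cong)

lemma sesq_axis_axis: "sesq A (axis i a) (axis j b) = cnj a * A$i$j * b"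
  unfolding sesq_axis_left by (simp add: axis_def if_distrib if_distribR cong: if_cong)

lemma qform_axis: "qform A (axis i c) = cnj c * A$i$i * c"
  by (simp add: qform_eq_sesq sesq_axis_axis)

lemma qform_axis_add_axis:
  "qform A (axis i a + axis j c)
     = cnj a * A$i$i * a + cnj c * A$j$j * c + cnj a * A$i$j * c + cnj c * A$j$i * a"
  by (simp add: qform_add qform_axis sesq_axis_axis)

lemma qform_matrix_add: "qform (A + B) x = qform A x + qform B x"
  by (simp add: qform_def algebra_simps sum.distrib)

lemma qform_matrix_diff: "qform (A - B) x = qform A x - qform B x"
  by (simp add: qform_def algebra_simps sum_subtractf)

lemma qform_matrix_scaleR: "qform (a *\<^sub>R A) x = complex_of_real a * qform A x"
  unfolding qform_def vector_scaleR_component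
  unfolding scaleR_conv_of_real
  by (simp add: algebra_simps sum_distrib_left)

lemma qform_scaleR: "qform A (c *\<^sub>R x) = complex_of_real (c\<^sup>2) * qform A x"
  unfolding qform_def vector_scaleR_component
  unfolding scaleR_conv_of_real
  by (simp add: sum_distrib_left mult_ac power2_eq_square)

lemma qform_mat: "qform (mat c) x = c * complex_of_real ((norm x)\<^sup>2)"
proof -
  have "qform (mat c) x = c * (\<Sum>i\<in>UNIV. cnj (x$i) * x$i)"
    by (simp add: qform_def mat_def if_distrib if_distribR sum_distrib_left mult_ac cong: if_cong)
  then show ?thesis by (simp only: sum_cnj_mult_self)
qed

lemma psd_add: "psd A \<Longrightarrow> psd B \<Longrightarrow> psd (A + B)"
  by (simp add: psd_def qform_matrix_add)

lemma psd_scaleR: "psd A \<Longrightarrow> 0 \<le> a \<Longrightarrow> psd (a *\<^sub>R A)"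
  by (simp add: psd_def qform_matrix_scaleR)

lemma psd_diag:
  assumes "psd A"
  shows "Im (A$i$i) = 0" and "0 \<le> Re (A$i$i)"
  using assms[unfolded psd_def, rule_format, of "axis i 1"] by (auto simp: qform_axis)

lemma psd_cnj_entry:
  assumes "psd A"
  shows "A$j$i = cnj (A$i$j)"
proof -
  have "Im (qform A (axis i 1 + axis j 1)) = 0" and "Im (qform A (axis i 1 + axis j \<i>)) = 0"
    using assms by (auto simp: psd_def)
  then have "Im (A$i$j + A$j$i) = 0" and "Re (A$i$j - A$j$i) = 0"
    using psd_diag[OF assms, of i] psd_diag[OF assms, of j] by (auto simp: qform_axis_add_axis)
  then show ?thesis by (simp add: complex_eq_iff)
qed

lemma psd_zero_diag_row:
  assumes "psd A" and "A$i$i = 0"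
  shows "A$i$j = 0"
proof (rule ccontr)
  assume "A$i$j \<noteq> 0"
  define m where "m = (cmod (A$i$j))\<^sup>2"
  have m: "m > 0" using \<open>A$i$j \<noteq> 0\<close> by (simp add: m_def)
  define s where "s = (Re (A$j$j) + 1) / m"
  define c where "c = - complex_of_real s * A$i$j"
  have "0 \<le> Re (qform A (axis j 1 + axis i c))"
    using assms(1) by (simp add: psd_def)
  also have "qform A (axis j 1 + axis i c) = A$j$j + (c * cnj (A$i$j) + cnj c * A$i$j)"
    using assms(2) psd_cnj_entry[OF assms(1), of j i] by (simp add: qform_axis_add_axis)
  also have "c * cnj (A$i$j) + cnj c * A$i$j = - 2 * complex_of_real s * (A$i$j * cnj (A$i$j))"
    by (simp add: c_def algebra_simps)
  also have "A$i$j * cnj (A$i$j) = complex_of_real m"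
    by (simp only: m_def complex_norm_square)
  also have "Re (A$j$j + - 2 * complex_of_real s * complex_of_real m) = - Re (A$j$j) - 2"
    using m by (simp add: s_def field_simps)
  finally show False using psd_diag(2)[OF assms(1), of j] by simp
qed

text \<open>Cauchy--Schwarz for the semi-inner product \<open>x\<^sup>* A y\<close>, with \<open>y\<close> the \<open>i\<close>-th unit vector.\<close>
lemma psd_column_bound:
  assumes "psd A" and "0 < Re (A$i$i)"
  shows "(cmod (\<Sum>k\<in>UNIV. cnj (x$k) * A$k$i))\<^sup>2 \<le> Re (A$i$i) * Re (qform A x)"
proof -
  define b where "b = (\<Sum>k\<in>UNIV. cnj (x$k) * A$k$i)"
  define r where "r = Re (A$i$i)"
  have r: "r > 0" using assms(2) by (simp add: r_def)
  have Aii: "A$i$i = complex_of_real r"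
    using psd_diag(1)[OF assms(1), of i] by (simp add: r_def complex_eq_iff)
  have row: "(\<Sum>l\<in>UNIV. A$i$l * x$l) = cnj b"
    unfolding b_def by (simp add: psd_cnj_entry[OF assms(1), of _ i] mult.commute)
  define c where "c = - complex_of_real (1 / r) * cnj b"
  have "0 \<le> Re (qform A (x + axis i c))"
    using assms(1) by (simp add: psd_def)
  also have "qform A (x + axis i c) = qform A x + cnj c * A$i$i * c + b * c + cnj c * cnj b"
    by (simp add: qform_add qform_axis sesq_axis_right sesq_axis_left row b_def)
  also have "Re \<dots> = Re (qform A x) - (cmod b)\<^sup>2 / r"
    using r by (simp add: c_def Aii algebra_simps flip: complex_norm_square)
  finally show ?thesis
    using r by (simp add: b_def r_def field_simps)
qed

section \<open>Rank-one decomposition of psd matrices\<close>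

definition rank_one :: "complex^'n \<Rightarrow> complex^'n^'n" where
  "rank_one v = (\<chi> i j. v$i * cnj (v$j))"

lemma qform_rank_one:
  "qform (rank_one v) x = complex_of_real ((cmod (\<Sum>i\<in>UNIV. cnj (x$i) * v$i))\<^sup>2)"
proof -
  define \<beta> where "\<beta> = (\<Sum>i\<in>UNIV. cnj (x$i) * v$i)"
  have "\<beta> * cnj \<beta> = (\<Sum>i\<in>UNIV. cnj (x$i) * v$i) * (\<Sum>j\<in>UNIV. cnj (v$j) * x$j)"
    by (simp add: \<beta>_def mult.commute)
  then have "qform (rank_one v) x = \<beta> * cnj \<beta>"
    by (simp add: qform_def rank_one_def sum_product mult_ac)
  then show ?thesis
    unfolding \<beta>_def complex_norm_square .
qed

lemma psd_rank_one: "psd (rank_one v)"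
  by (simp add: psd_def qform_rank_one)

lemma trace_rank_one: "trace (rank_one v) = complex_of_real ((norm v)\<^sup>2)"
  unfolding trace_def rank_one_def sum_cnj_mult_self[symmetric] by (simp add: mult.commute)

lemma trace_rank_one_mult: "trace (rank_one v ** A) = qform A v"
  unfolding trace_matrix_mult qform_def rank_one_def
  by (subst sum.swap) (simp add: mult_ac)

text \<open>One step of a Cholesky factorisation; the remainder is a Schur complement.\<close>
lemma psd_diff_rank_one_column:
  fixes \<rho> :: "complex^'n^'n"
  assumes psd: "psd \<rho>" and r: "0 < Re (\<rho>$i$i)"
  defines "w \<equiv> \<chi> k. \<rho>$k$i / complex_of_real (sqrt (Re (\<rho>$i$i)))"
  shows "psd (\<rho> - rank_one w)" and "(\<rho> - rank_one w)$i$i = 0"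
    and "\<rho>$k$k = 0 \<Longrightarrow> (\<rho> - rank_one w)$k$k = 0"
proof -
  define r where "r = Re (\<rho>$i$i)"
  have "r > 0" using assms by (simp add: r_def)
  have \<rho>ii: "\<rho>$i$i = complex_of_real r"
    using psd_diag(1)[OF psd, of i] by (simp add: r_def complex_eq_iff)
  have rank_one_w: "rank_one w $k$l = \<rho>$k$i * \<rho>$i$l / complex_of_real r" for k l
  proof -
    have "complex_of_real (sqrt r) * complex_of_real (sqrt r) = complex_of_real r"
      using \<open>r > 0\<close> by (simp flip: of_real_mult)
    then show ?thesis
      using psd_cnj_entry[OF psd, of i l] \<open>r > 0\<close>
      by (simp add: rank_one_def w_def r_def[symmetric] field_simps)
  qed
  show "psd (\<rho> - rank_one w)"
    unfolding psd_def
  proof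
    fix x
    define b where "b = (\<Sum>k\<in>UNIV. cnj (x$k) * \<rho>$k$i)"
    have "(\<Sum>k\<in>UNIV. cnj (x$k) * w$k) = b / complex_of_real (sqrt r)"
      by (simp add: b_def w_def r_def sum_divide_distrib)
    then have "qform (\<rho> - rank_one w) x = qform \<rho> x - complex_of_real ((cmod b)\<^sup>2 / r)"
      using \<open>r > 0\<close> by (simp add: qform_matrix_diff qform_rank_one norm_divide power_divide)
    moreover have "(cmod b)\<^sup>2 / r \<le> Re (qform \<rho> x)"
      using psd_column_bound[OF psd r, of x] \<open>r > 0\<close> by (simp add: b_def r_def field_simps)
    ultimately show "Im (qform (\<rho> - rank_one w) x) = 0 \<and> 0 \<le> Re (qform (\<rho> - rank_one w) x)"
      using psd by (simp add: psd_def)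
  qed
  show "(\<rho> - rank_one w)$i$i = 0"
    using \<open>r > 0\<close> by (simp add: rank_one_w \<rho>ii)
  show "(\<rho> - rank_one w)$k$k = 0" if "\<rho>$k$k = 0"
    using that psd_zero_diag_row[OF psd that, of i] by (simp add: rank_one_w)
qed

lemma psd_eq_sum_list_rank_one:
  fixes \<rho> :: "complex^'n^'n"
  assumes "psd \<rho>"
  shows "\<exists>ws. \<rho> = sum_list (map rank_one ws)"
  using assms
proof (induction "card {i. \<rho>$i$i \<noteq> 0}" arbitrary: \<rho> rule: less_induct)
  case less
  show ?case
  proof (cases "\<forall>i. \<rho>$i$i = 0")
    case True
    then have "\<rho> = sum_list (map rank_one [])"
      using psd_zero_diag_row[OF less.prems] by (simp add: vec_eq_iff)
    then show ?thesis by blast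
  next
    case False
    then obtain i where "\<rho>$i$i \<noteq> 0" by blast
    then have r: "0 < Re (\<rho>$i$i)"
      using psd_diag[OF less.prems, of i] by (simp add: complex_eq_iff)
    define w :: "complex^'n" where "w = (\<chi> k. \<rho>$k$i / complex_of_real (sqrt (Re (\<rho>$i$i))))"
    define \<rho>' where "\<rho>' = \<rho> - rank_one w"
    note step = psd_diff_rank_one_column[OF less.prems r, folded w_def \<rho>'_def]
    have "{k. \<rho>'$k$k \<noteq> 0} \<subset> {k. \<rho>$k$k \<noteq> 0}"
      using step(2,3) \<open>\<rho>$i$i \<noteq> 0\<close> by blast
    then have "card {k. \<rho>'$k$k \<noteq> 0} < card {k. \<rho>$k$k \<noteq> 0}"
      by (rule psubset_card_mono[rotated]) simp
    then obtain ws where "\<rho>' = sum_list (map rank_one ws)"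
      using less.hyps step(1) by blast
    then have "\<rho> = sum_list (map rank_one (w # ws))"
      by (simp add: \<rho>'_def algebra_simps)
    then show ?thesis by blast
  qed
qed

lemma trace_mult_psd_nonneg:
  fixes \<rho> A :: "complex^'n^'n"
  assumes "psd \<rho>" and A: "\<And>x. 0 \<le> Re (qform A x)"
  shows "0 \<le> Re (trace (\<rho> ** A))"
proof -
  obtain ws where "\<rho> = sum_list (map rank_one ws)"
    using psd_eq_sum_list_rank_one[OF assms(1)] by blast
  moreover have "0 \<le> Re (trace (sum_list (map rank_one ws) ** A))" for ws
    by (induction ws) (simp_all add: trace_0[unfolded mat_0] trace_mult_add_left trace_rank_one_mult A)
  ultimately show ?thesis by simp
qed

section \<open>The overlap with \<open>H\<close>\<close>

lemma Rayleigh_quotient_max: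
  fixes H :: "complex^'n^'n"
  obtains v where "norm v = 1" and "\<And>x. Re (qform H x) \<le> Re (qform H v) * (norm x)\<^sup>2"
proof -
  have "continuous_on (sphere 0 1) (\<lambda>x::complex^'n. Re (qform H x))"
    unfolding qform_def by (intro continuous_intros)
  moreover have "sphere (0::complex^'n) 1 \<noteq> {}" by simp
  ultimately obtain v where v: "v \<in> sphere (0::complex^'n) 1"
    and max: "\<forall>y\<in>sphere 0 1. Re (qform H y) \<le> Re (qform H v)"
    using continuous_attains_sup[OF compact_sphere] by blast
  have "Re (qform H x) \<le> Re (qform H v) * (norm x)\<^sup>2" for x
  proof (cases "x = 0")
    case True
    then show ?thesis by (simp add: qform_def)
  next
    case False
    define u where "u = (1 / norm x) *\<^sub>R x"
    have "u \<in> sphere 0 1" using False by (simp add: u_def)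
    then have "Re (qform H u) \<le> Re (qform H v)" using max by blast
    moreover have "x = norm x *\<^sub>R u" using False by (simp add: u_def)
    then have "qform H x = complex_of_real ((norm x)\<^sup>2) * qform H u" by (metis qform_scaleR)
    ultimately show ?thesis
      by (simp add: mult.commute[of _ "(norm x)\<^sup>2"] mult_left_mono)
  qed
  with v show ?thesis using that by simp
qed

lemma trace_mult_le_of_qform_le:
  fixes \<rho> H :: "complex^'n^'n"
  assumes "psd \<rho>" and "trace \<rho> = 1" and H: "\<And>x. Re (qform H x) \<le> c * (norm x)\<^sup>2"
  shows "Re (trace (\<rho> ** H)) \<le> c"
proof -
  have "0 \<le> Re (trace (\<rho> ** (mat (complex_of_real c) - H)))"
    using assms(1) by (rule trace_mult_psd_nonneg) (simp add: qform_matrix_diff qform_mat H)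
  also have "trace (\<rho> ** (mat (complex_of_real c) - H)) = complex_of_real c - trace (\<rho> ** H)"
    using assms(2) by (simp add: trace_mult_diff_right trace_mult_mat_right)
  finally show ?thesis by simp
qed

lemma trace_mult_self_psd:
  assumes "psd \<rho>"
  shows "trace (\<rho> ** \<rho>) = complex_of_real ((norm \<rho>)\<^sup>2)"
proof -
  have entry: "\<rho>$i$k * \<rho>$k$i = complex_of_real ((cmod (\<rho>$i$k))\<^sup>2)" for i k
    by (simp only: psd_cnj_entry[OF assms, of i k] complex_norm_square complex_cnj_cnj)
  show ?thesis
    by (simp only: trace_matrix_mult entry power2_norm_vec of_real_sum)
qed

lemma inner_hermitian_eq_Re_trace:
  assumes "hermitian H"
  shows "inner X H = Re (trace (X ** H))"
proof -
  have H: "H$j$i = cnj (H$i$j)" for i j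
    using arg_cong[where f = "\<lambda>M. M$j$i", OF assms[unfolded hermitian_def]]
    by (simp add: conj_transpose_def)
  have "inner (X$i$j) (H$i$j) = Re (X$i$j * H$j$i)" for i j
    unfolding H[of i j] by (simp add: inner_complex_def)
  then show ?thesis by (simp add: inner_vec_def trace_matrix_mult)
qed

lemma frob_norm_diff_le_of_overlap_le:
  fixes \<rho> \<rho>' H :: "complex^'n^'n"
  assumes "hermitian H" and "norm \<rho>' = norm \<rho>"
    and "Re (trace (\<rho> ** H)) \<le> Re (trace (\<rho>' ** H))"
  shows "frob_norm (\<rho>' - H) \<le> frob_norm (\<rho> - H)"
proof -
  have "(norm (X - H))\<^sup>2 = (norm X)\<^sup>2 + (norm H)\<^sup>2 - 2 * Re (trace (X ** H))" for X
    using dot_norm_neg[of X H] by (simp add: inner_hermitian_eq_Re_trace[OF assms(1)])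
  then have "(norm (\<rho>' - H))\<^sup>2 \<le> (norm (\<rho> - H))\<^sup>2"
    using assms(2,3) by simp
  then show ?thesis
    unfolding frob_norm_eq_norm by (rule power2_le_imp_le) simp
qed

section \<open>The set \<open>S\<^sup>t\<close>\<close>

lemma compact_St: "compact (St t :: (complex^'n^'n) set)"
proof -
  have "bounded (St t :: (complex^'n^'n) set)"
    unfolding bounded_iff
  proof (intro exI ballI)
    fix \<rho> :: "complex^'n^'n"
    assume "\<rho> \<in> St t"
    then have "psd \<rho>" and "Re (trace (\<rho> ** \<rho>)) \<le> t" by (simp_all add: St_def)
    then have "(norm \<rho>)\<^sup>2 \<le> t" by (simp add: trace_mult_self_psd)
    then show "norm \<rho> \<le> sqrt t" by (rule real_le_rsqrt)
  qed
  moreover have "closed (St t :: (complex^'n^'n) set)"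
    unfolding St_def psd_def qform_def trace_matrix_mult
    unfolding trace_def
    by (intro closed_Collect_conj closed_Collect_all closed_Collect_eq closed_Collect_le
        continuous_intros)
  ultimately show ?thesis by (simp add: compact_eq_bounded_closed)
qed

lemma maximally_mixed_in_St:
  assumes "1 / real CARD('n) \<le> t"
  shows "(mat (complex_of_real (1 / real CARD('n))) :: complex^'n^'n) \<in> St t"
proof -
  define c where "c = 1 / real CARD('n)"
  have "psd (mat (complex_of_real c) :: complex^'n^'n)"
    by (simp add: psd_def qform_mat c_def)
  moreover have tr: "trace (mat (complex_of_real c) :: complex^'n^'n) = 1"
    by (simp add: trace_def mat_def c_def)
  moreover have "trace (mat (complex_of_real c) ** mat (complex_of_real c) :: complex^'n^'n)
      = complex_of_real c"
    by (simp only: trace_mult_mat_right tr mult_1)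
  ultimately show ?thesis
    using assms by (simp add: St_def c_def)
qed

lemma St_raise_purity:
  fixes \<rho>\<^sub>0 H :: "complex^'n^'n"
  assumes "\<rho>\<^sub>0 \<in> St t" and "t \<le> 1"
  obtains \<rho> where "\<rho> \<in> St t" and "trace (\<rho> ** \<rho>) = complex_of_real t"
    and "Re (trace (\<rho>\<^sub>0 ** H)) \<le> Re (trace (\<rho> ** H))"
proof -
  obtain v where "norm v = 1" and v: "\<And>x. Re (qform H x) \<le> Re (qform H v) * (norm x)\<^sup>2"
    using Rayleigh_quotient_max by blast
  define \<sigma> where "\<sigma> = rank_one v"
  have \<sigma>: "psd \<sigma>" "trace \<sigma> = 1" "trace (\<sigma> ** \<sigma>) = 1" "trace (\<sigma> ** H) = qform H v"
    using \<open>norm v = 1\<close> by (simp_all add: \<sigma>_def psd_rank_one trace_rank_one trace_rank_one_mult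
        qform_rank_one sum_cnj_mult_self)
  have \<rho>\<^sub>0: "psd \<rho>\<^sub>0" "trace \<rho>\<^sub>0 = 1" "Re (trace (\<rho>\<^sub>0 ** \<rho>\<^sub>0)) \<le> t"
    using assms(1) by (simp_all add: St_def)
  have le_top: "Re (trace (\<rho>\<^sub>0 ** H)) \<le> Re (qform H v)"
    using \<rho>\<^sub>0(1,2) v by (rule trace_mult_le_of_qform_le)
  define R where "R s = (1 - s) *\<^sub>R \<rho>\<^sub>0 + s *\<^sub>R \<sigma>" for s :: real
  have "continuous_on {0..1} (\<lambda>s. Re (trace (R s ** R s)))"
    unfolding R_def trace_matrix_mult by (intro continuous_intros)
  then obtain s where s: "0 \<le> s" "s \<le> 1" and purity: "Re (trace (R s ** R s)) = t"
    using IVT'[of "\<lambda>s. Re (trace (R s ** R s))" 0 t 1] \<rho>\<^sub>0(3) \<sigma>(3) assms(2)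
    by (auto simp: R_def)
  have "psd (R s)"
    using s by (simp add: R_def psd_add psd_scaleR \<rho>\<^sub>0(1) \<sigma>(1))
  moreover have "trace (R s) = 1"
    by (simp add: R_def trace_add trace_scaleR \<rho>\<^sub>0(2) \<sigma>(2) flip: of_real_add)
  ultimately have "R s \<in> St t" and "trace (R s ** R s) = complex_of_real t"
    using purity by (simp_all add: St_def trace_mult_self_psd)
  moreover have "Re (trace (R s ** H))
      = Re (trace (\<rho>\<^sub>0 ** H)) + s * (Re (qform H v) - Re (trace (\<rho>\<^sub>0 ** H)))"
    unfolding R_def trace_mult_add_left trace_mult_scaleR_left \<sigma>(4) by (simp add: algebra_simps)
  then have "Re (trace (\<rho>\<^sub>0 ** H)) \<le> Re (trace (R s ** H))"
    using le_top s(1) by simp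
  ultimately show ?thesis using that by blast
qed

lemma St_max_exists_at_purity:
  fixes H :: "complex^'n^'n"
  assumes "1 / real CARD('n) \<le> t" and "t \<le> 1"
  shows "\<exists>\<rho>s \<in> St t. trace (\<rho>s ** \<rho>s) = complex_of_real t \<and>
           (\<forall>\<rho> \<in> St t. Re (trace (\<rho> ** H)) \<le> Re (trace (\<rho>s ** H)))"
proof -
  have "continuous_on (St t) (\<lambda>\<rho>::complex^'n^'n. Re (trace (\<rho> ** H)))"
    unfolding trace_matrix_mult by (intro continuous_intros)
  then obtain \<rho>\<^sub>0 where "\<rho>\<^sub>0 \<in> St t"
    and max: "\<forall>\<rho>\<in>St t. Re (trace (\<rho> ** H)) \<le> Re (trace (\<rho>\<^sub>0 ** H))"
    using continuous_attains_sup[OF compact_St] maximally_mixed_in_St[OF assms(1)] by blast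
  obtain \<rho>s where "\<rho>s \<in> St t" "trace (\<rho>s ** \<rho>s) = complex_of_real t"
    and "Re (trace (\<rho>\<^sub>0 ** H)) \<le> Re (trace (\<rho>s ** H))"
    using St_raise_purity[OF \<open>\<rho>\<^sub>0 \<in> St t\<close> assms(2)] by blast
  with max show ?thesis by force
qed

theorem mainTheorem5:
  fixes H :: "complex^'n^'n" and t :: real
  assumes "hermitian H"
    and "1 / real CARD('n) < t" and "t < 1"
  shows "(\<exists>\<rho>s \<in> St t. trace (\<rho>s ** \<rho>s) = complex_of_real t \<and>
            (\<forall>\<rho> \<in> St t. Re (trace (\<rho> ** H)) \<le> Re (trace (\<rho>s ** H))))
       \<and> (\<forall>\<rho>s \<in> St t. trace (\<rho>s ** \<rho>s) = complex_of_real t \<and>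
            (\<forall>\<rho> \<in> St t. Re (trace (\<rho> ** H)) \<le> Re (trace (\<rho>s ** H)))
          \<longrightarrow> (\<forall>\<rho>. psd \<rho> \<and> trace \<rho> = 1 \<and> trace (\<rho> ** \<rho>) = complex_of_real t
                 \<longrightarrow> frob_norm (\<rho>s - H) \<le> frob_norm (\<rho> - H)))"
proof (intro conjI ballI impI allI)
  show "\<exists>\<rho>s \<in> St t. trace (\<rho>s ** \<rho>s) = complex_of_real t \<and>
          (\<forall>\<rho> \<in> St t. Re (trace (\<rho> ** H)) \<le> Re (trace (\<rho>s ** H)))"
    by (rule St_max_exists_at_purity) (use assms(2,3) in auto)
next
  fix \<rho>s \<rho> :: "complex^'n^'n"
  assume "\<rho>s \<in> St t"
    and \<rho>s: "trace (\<rho>s ** \<rho>s) = complex_of_real t \<and>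
              (\<forall>\<rho> \<in> St t. Re (trace (\<rho> ** H)) \<le> Re (trace (\<rho>s ** H)))"
    and \<rho>: "psd \<rho> \<and> trace \<rho> = 1 \<and> trace (\<rho> ** \<rho>) = complex_of_real t"
  then have "\<rho> \<in> St t" and "psd \<rho>" and "psd \<rho>s" by (simp_all add: St_def)
  have "complex_of_real ((norm \<rho>s)\<^sup>2) = complex_of_real ((norm \<rho>)\<^sup>2)"
    using \<rho>s \<rho> by (simp only: trace_mult_self_psd[OF \<open>psd \<rho>s\<close>] trace_mult_self_psd[OF \<open>psd \<rho>\<close>])
  then have "norm \<rho>s = norm \<rho>" by (simp only: of_real_eq_iff) simp
  then show "frob_norm (\<rho>s - H) \<le> frob_norm (\<rho> - H)"
    using frob_norm_diff_le_of_overlap_le assms(1) \<rho>s \<open>\<rho> \<in> St t\<close> by blast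
qed

end
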